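(* Let $H_\varepsilon=T_\varepsilon+V_\varepsilon$ be as in the context. For $x\in(\varepsilon\mathbb Z)^d$, $R>0$ let $B_x(R)=\{y\in(\varepsilon\mathbb Z)^d:|x-y|<R\}$, $\Lambda_R(x,H_\varepsilon):=\inf\{\langle H_\varepsilon\phi,\phi\rangle/\|\phi\|^2_{\ell^2}:\phi\in c_0(B_x(R)),\phi\ne0\}$, and $$\Sigma(H_\varepsilon):=\sup_{K\subset(\varepsilon\mathbb Z)^d\text{ finite}}\inf\Big\{\frac{\langle H_\varepsilon\phi,\phi\rangle}{\|\phi\|^2_{\ell^2}}:\ \phi\in c_0((\varepsilon\mathbb Z)^d\setminus K),\ \phi\ne0\Big\}.$$ Then $$\Sigma(H_\varepsilon)=\lim_{R\to+\infty}\liminf_{|x|\to\infty}\Lambda_R(x,H_\varepsilon).$$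
   Context: Let $d\ge1$, $\varepsilon\in(0,1]$, $\ell^2((\varepsilon\mathbb Z)^d)$ with $\langle u,v\rangle=\sum_x\bar u(x)v(x)$, $(\tau_\gamma u)(x)=u(x+\gamma)$. For $D\subset(\varepsilon\mathbb Z)^d$, $c_0(D)$ is the space of real-valued functions on $(\varepsilon\mathbb Z)^d$ with finite support contained in $D$. (a) Coefficients $a_\gamma(x,\varepsilon)\in\mathbb R$ ($\gamma\in(\varepsilon\mathbb Z)^d$, $x\in\mathbb R^d$) with: (i) $a_\gamma=a^{(0)}_\gamma(x)+\varepsilon a^{(1)}_\gamma(x)+R^{(2)}_\gamma(x,\varepsilon)$, $a^{(j)}_\gamma\in C^\infty$, $|a^{(j)}_\gamma(x)-a^{(j)}_\gamma(x+h)|=O(|h|)$ uniformly in $\gamma,x$, $R^{(2)}_\gamma\in C^\infty(\mathbb R^d\times(0,1])$; (ii) $\sum_\gamma a^{(0)}_\gamma=0$, $a^{(0)}_\gamma\le0$ for $\gamma\ne0$; (iii) $a_\gamma(x,\varepsilon)=a_{-\gamma}(x+\gamma,\varepsilon)$; (iv) for all $n\in\mathbb N,\alpha\in\mathbb N^d$, $\|\,|\cdot/\varepsilon|^n\partial^\alpha_xa^{(j)}_\cdot(x)\|_{\ell^2_\gamma}\le C$ and $\|\,|\cdot/\varepsilon|^n\partial^\alpha_xR^{(2)}_\cdot(x,\varepsilon)\|_{\ell^2_\gamma}\le C\varepsilon^2$ uniformly; (v) $\mathrm{span}\{\gamma:a^{(0)}_\gamma(x)<0\}=\mathbb R^d$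 for all $x$. $T_\varepsilon=\sum_\gamma a_\gamma(\cdot,\varepsilon)\tau_\gamma$. (b) $V_\varepsilon$ is the restriction to $(\varepsilon\mathbb Z)^d$ of $\hat V_\varepsilon=V_0+\varepsilon V_1+R_2(\cdot;\varepsilon)\in C^\infty(\mathbb R^d)$, $V_0,V_1\in C^\infty$, $R_2\in C^\infty(\mathbb R^d\times(0,\varepsilon_0])$, $\sup_K|R_2|\le C_K\varepsilon^2$ on compacts $K$; $V_\varepsilon$ polynomially bounded and $V_\varepsilon(x)>C>0$ for $|x|\ge R$, $\varepsilon\le\varepsilon_0$; $V_0\ge0$, vanishing exactly at finitely many points $x_1,\dots,x_m$ with positive definite Hessians. (c) $t_0(x_j,\xi):=\sum_\gamma a^{(0)}_\gamma(x_j)e^{-i\gamma\cdot\xi/\varepsilon}>0$ for $\xi\notin2\pi\mathbb Z^d$. $H_\varepsilon$ is the self-adjoint realization of $T_\varepsilon+V_\varepsilon$ on the maximal domain of multiplication by $V_\varepsilon$. *)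

theory Defs
  imports "HOL-Analysis.Analysis"
begin

section \<open>Lattice (eps Z)^d, indexed by integer vectors k (lattice point = eps * k)\<close>

definition rvec :: "int ^ 'n \<Rightarrow> real ^ 'n" where
  "rvec k = (\<chi> i. real_of_int (k $ i))"

definition pdir :: "'a set \<Rightarrow> 'a \<Rightarrow> ('a::real_normed_vector \<Rightarrow> real) \<Rightarrow> 'a \<Rightarrow> real" where
  "pdir S v f x = frechet_derivative f (at x within S) v"

fun pds :: "'a set \<Rightarrow> 'a list \<Rightarrow> ('a::real_normed_vector \<Rightarrow> real) \<Rightarrow> 'a \<Rightarrow> real" where
  "pds S [] f = f"
| "pds S (v # vs) f = pdir S v (pds S vs f)"

text \<open>A multi-index derivative \<open>\<partial>^\<alpha>\<close> is a list of basis directions.\<close>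
definition smooth_on :: "'a::euclidean_space set \<Rightarrow> ('a \<Rightarrow> real) \<Rightarrow> bool" where
  "smooth_on S f \<longleftrightarrow> (\<forall>vs. set vs \<subseteq> Basis \<longrightarrow> pds S vs f differentiable_on S)"

text \<open>\<open>a k x e\<close> is the coefficient \<open>a_\<gamma>(x,\<epsilon>)\<close> for \<open>\<gamma> = \<epsilon> k\<close>;
  \<open>(T u)(x) = \<Sum>_\<gamma> a_\<gamma>(x,\<epsilon>) u(x+\<gamma>)\<close>.\<close>
definition Top :: "(int^'n \<Rightarrow> real^'n \<Rightarrow> real \<Rightarrow> real) \<Rightarrow> real \<Rightarrow> (int^'n \<Rightarrow> real) \<Rightarrow> int^'n \<Rightarrow> real" where
  "Top a e u k = (\<Sum>\<^sub>\<infinity>l. a l (e *\<^sub>R rvec k) e * u (k + l))"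

definition Hop :: "(int^'n \<Rightarrow> real^'n \<Rightarrow> real \<Rightarrow> real) \<Rightarrow> (real \<Rightarrow> real^'n \<Rightarrow> real) \<Rightarrow> real
     \<Rightarrow> (int^'n \<Rightarrow> real) \<Rightarrow> int^'n \<Rightarrow> real" where
  "Hop a V e u k = Top a e u k + V e (e *\<^sub>R rvec k) * u k"

definition linner :: "(int^'n \<Rightarrow> real) \<Rightarrow> (int^'n \<Rightarrow> real) \<Rightarrow> real" where
  "linner u v = (\<Sum>\<^sub>\<infinity>k. u k * v k)"

definition c0 :: "(int^'n) set \<Rightarrow> (int^'n \<Rightarrow> real) set" where
  "c0 D = {\<phi>. finite {k. \<phi> k \<noteq> 0} \<and> {k. \<phi> k \<noteq> 0} \<subseteq> D}"

definition rayleigh where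
  "rayleigh a V e \<phi> = linner (Hop a V e \<phi>) \<phi> / linner \<phi> \<phi>"

definition lball :: "real \<Rightarrow> int^'n \<Rightarrow> real \<Rightarrow> (int^'n) set" where
  "lball e k R = {l. dist (e *\<^sub>R rvec k) (e *\<^sub>R rvec l) < R}"

definition LambdaR where
  "LambdaR a V e R k = (INF \<phi>\<in>{\<phi>\<in>c0 (lball e k R). \<phi> \<noteq> (\<lambda>_. 0)}. ereal (rayleigh a V e \<phi>))"

definition Sigma_ess where
  "Sigma_ess a V e = (SUP K\<in>{K. finite K}.
      INF \<phi>\<in>{\<phi>\<in>c0 (UNIV - K). \<phi> \<noteq> (\<lambda>_. 0)}. ereal (rayleigh a V e \<phi>))"

definition at_infty_lat :: "real \<Rightarrow> (int^'n) filter" where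
  "at_infty_lat e = filtercomap (\<lambda>k. norm (e *\<^sub>R rvec k)) at_top"

definition t0 :: "(int^'n \<Rightarrow> real^'n \<Rightarrow> real) \<Rightarrow> real^'n \<Rightarrow> real^'n \<Rightarrow> complex" where
  "t0 a0 x \<xi> = (\<Sum>\<^sub>\<infinity>k. complex_of_real (a0 k x) * cis (- (rvec k \<bullet> \<xi>)))"

end

theory Submission
  imports Defs
begin

text \<open>The lower bound is soft: once \<open>|x| \<ge> R + max\<^sub>K |y|\<close>, the ball \<open>B\<^sub>x(R)\<close> avoids the finite set
  \<open>K\<close>, so \<open>\<Lambda>\<^sub>R(x)\<close> dominates the infimum of the Rayleigh quotient over \<open>c\<^sub>0\<close> of the complement of \<open>K\<close>.
  For the upper bound take \<open>\<phi>\<close> supported far out with Rayleigh quotient close to \<open>\<Sigma>\<close>. Averaging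
  over all translates of a window of width \<open>r\<close> in one coordinate shows that some cut-off of
  \<open>\<phi>\<close> to such a window raises the Rayleigh quotient by at most \<open>B/r\<close>, where
  \<open>B = sup\<^sub>k \<Sum>\<^sub>l |a\<^sub>l(\<epsilon>k)| |l|\<close> is finite by the decay of the coefficients. Repeating this in all
  \<open>d\<close> coordinates localizes \<open>\<phi>\<close> to a cube of diameter less than \<open>\<epsilon> d r \<le> R\<close>, at the cost \<open>d B / r\<close>,
  which vanishes as \<open>r\<close> grows with \<open>R\<close>.\<close>

lemma infsum_finite_support:
  assumes "finite S" "\<And>x. x \<notin> S \<Longrightarrow> f x = 0"
  shows "infsum f UNIV = sum f S"
proof -
  have "infsum f UNIV = infsum f S"
    by (rule infsum_cong_neutral) (use assms in auto)
  then show ?thesis using assms by simp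
qed

definition lattice_quad_form ::
    "(int^'n \<Rightarrow> int^'n \<Rightarrow> real) \<Rightarrow> (int^'n \<Rightarrow> real) \<Rightarrow> (int^'n) set \<Rightarrow> (int^'n \<Rightarrow> real) \<Rightarrow> real" where
  "lattice_quad_form A W P \<phi> =
     (\<Sum>k\<in>P. \<Sum>m\<in>P. A (m - k) k * \<phi> m * \<phi> k) + (\<Sum>k\<in>P. W k * (\<phi> k)\<^sup>2)"

lemma Top_finite_support:
  assumes "finite P" "\<And>k. k \<notin> P \<Longrightarrow> \<phi> k = 0"
  shows "Top a e \<phi> k = (\<Sum>m\<in>P. a (m - k) (e *\<^sub>R rvec k) e * \<phi> m)"
proof -
  have "Top a e \<phi> k = (\<Sum>l\<in>(\<lambda>m. m - k) ` P. a l (e *\<^sub>R rvec k) e * \<phi> (k + l))"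
    unfolding Top_def
  proof (rule infsum_finite_support)
    fix l assume "l \<notin> (\<lambda>m. m - k) ` P"
    then have "k + l \<notin> P" by (metis add_diff_cancel_left' image_eqI)
    then show "a l (e *\<^sub>R rvec k) e * \<phi> (k + l) = 0" using assms by simp
  qed (use assms in simp)
  also have "\<dots> = (\<Sum>m\<in>P. a (m - k) (e *\<^sub>R rvec k) e * \<phi> m)"
    by (subst sum.reindex) (auto simp: inj_on_def)
  finally show ?thesis .
qed

lemma rayleigh_finite_support:
  assumes "finite P" "\<And>k. k \<notin> P \<Longrightarrow> \<phi> k = 0"
  shows "rayleigh a V e \<phi> =
    lattice_quad_form (\<lambda>l k. a l (e *\<^sub>R rvec k) e) (\<lambda>k. V e (e *\<^sub>R rvec k)) P \<phi> / (\<Sum>k\<in>P. (\<phi> k)\<^sup>2)"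
proof -
  have "linner (Hop a V e \<phi>) \<phi> = (\<Sum>k\<in>P. Hop a V e \<phi> k * \<phi> k)"
    unfolding linner_def by (rule infsum_finite_support) (use assms in auto)
  also have "\<dots> = lattice_quad_form (\<lambda>l k. a l (e *\<^sub>R rvec k) e) (\<lambda>k. V e (e *\<^sub>R rvec k)) P \<phi>"
    unfolding Hop_def lattice_quad_form_def
    by (simp add: Top_finite_support[OF assms] sum.distrib algebra_simps sum_distrib_right
        sum_distrib_left power2_eq_square)
  moreover have "linner \<phi> \<phi> = (\<Sum>k\<in>P. (\<phi> k)\<^sup>2)"
    unfolding linner_def power2_eq_square by (rule infsum_finite_support) (use assms in auto)
  ultimately show ?thesis by (simp add: rayleigh_def)
qed

section \<open>Weighted sums over lattice points\<close>

definition lattice_box :: "nat \<Rightarrow> (int^'n) set" where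
  "lattice_box N = {l. \<forall>i. \<bar>l $ i\<bar> \<le> int N}"

lemma lattice_box_eq_image_PiE:
  "lattice_box N = vec_lambda ` (PiE UNIV (\<lambda>_. {-int N..int N}))"
proof (rule set_eqI, rule iffI)
  fix l :: "int^'n"
  assume "l \<in> lattice_box N"
  then have "vec_nth l \<in> PiE UNIV (\<lambda>_. {-int N..int N})"
    by (force simp: lattice_box_def abs_le_iff)
  then show "l \<in> vec_lambda ` (PiE UNIV (\<lambda>_. {-int N..int N}))"
    by (metis image_eqI vec_nth_inverse)
next
  fix l :: "int^'n"
  assume "l \<in> vec_lambda ` (PiE UNIV (\<lambda>_. {-int N..int N}))"
  then obtain g where "g \<in> PiE UNIV (\<lambda>_. {-int N..int N})" "l = vec_lambda g" by blast
  then have "g i \<in> {-int N..int N}" for i by auto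
  then show "l \<in> lattice_box N"
    using \<open>l = vec_lambda g\<close> by (simp add: lattice_box_def abs_le_iff minus_le_iff)
qed

lemma finite_lattice_box: "finite (lattice_box N)"
  unfolding lattice_box_eq_image_PiE by (intro finite_imageI finite_PiE) auto

lemma sum_lattice_box_prod:
  fixes w :: "int \<Rightarrow> real"
  shows "(\<Sum>l\<in>(lattice_box N :: (int^'n) set). \<Prod>i\<in>UNIV. w (l $ i)) =
         (\<Prod>i\<in>(UNIV::'n set). \<Sum>t\<in>{-int N..int N}. w t)"
proof -
  have "(\<Sum>l\<in>(lattice_box N :: (int^'n) set). \<Prod>i\<in>UNIV. w (l $ i)) =
        (\<Sum>g\<in>PiE UNIV (\<lambda>_. {-int N..int N}). \<Prod>i\<in>(UNIV::'n set). w (g i))"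
    unfolding lattice_box_eq_image_PiE by (subst sum.reindex) (auto simp: inj_on_def vec_lambda_inject)
  also have "\<dots> = (\<Prod>i\<in>(UNIV::'n set). \<Sum>t\<in>{-int N..int N}. w t)"
    by (rule prod_sum_PiE[symmetric]) auto
  finally show ?thesis .
qed

lemma abs_component_le_norm_rvec: "\<bar>real_of_int (l $ i)\<bar> \<le> norm (rvec l)"
  using component_le_norm_cart[of "rvec l" i] by (simp add: rvec_def)

lemma finite_lattice_norm_less:
  assumes "0 < e"
  shows "finite {k::int^'n. norm (e *\<^sub>R rvec k) < X}"
proof (rule finite_subset[OF _ finite_lattice_box[of "nat \<lceil>X / e\<rceil>"]])
  show "{k::int^'n. norm (e *\<^sub>R rvec k) < X} \<subseteq> lattice_box (nat \<lceil>X / e\<rceil>)"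
  proof (clarify, unfold lattice_box_def mem_Collect_eq, rule allI)
    fix k :: "int^'n" and i
    assume "norm (e *\<^sub>R rvec k) < X"
    moreover have "norm (e *\<^sub>R rvec k) = e * norm (rvec k)" using assms by simp
    ultimately have "e * \<bar>real_of_int (k $ i)\<bar> < X"
      using mult_left_mono[OF abs_component_le_norm_rvec[of k i] less_imp_le[OF assms]] by linarith
    then have "\<bar>real_of_int (k $ i)\<bar> < X / e"
      using assms by (simp add: pos_less_divide_eq mult.commute)
    also have "\<dots> \<le> real_of_int \<lceil>X / e\<rceil>" by (rule le_of_int_ceiling)
    finally show "\<bar>k $ i\<bar> \<le> int (nat \<lceil>X / e\<rceil>)" by linarith
  qed
qed

definition inv_sq_weight :: "int \<Rightarrow> real" where
  "inv_sq_weight t = 1 / max 1 ((real_of_int t)\<^sup>2)"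

lemma sum_inv_sq_weight_le: "(\<Sum>t\<in>{-int N..int N}. inv_sq_weight t) \<le> 5"
proof -
  have "(\<Sum>t\<in>{-int N..int N}. inv_sq_weight t) \<le> 5 - 4 / (real N + 1)"
  proof (induction N)
    case 0
    then show ?case by (simp add: inv_sq_weight_def)
  next
    case (Suc N)
    define x where "x = real N"
    have x: "0 \<le> x" by (simp add: x_def)
    have "{-int (Suc N)..int (Suc N)} = insert (-int (Suc N)) (insert (int (Suc N)) {-int N..int N})"
      by auto
    then have "(\<Sum>t\<in>{-int (Suc N)..int (Suc N)}. inv_sq_weight t) =
        2 / (x + 1)\<^sup>2 + (\<Sum>t\<in>{-int N..int N}. inv_sq_weight t)"
      by (simp add: inv_sq_weight_def x_def max_def power2_eq_square algebra_simps)
    also have "\<dots> \<le> 2 / (x + 1)\<^sup>2 + (5 - 4 / (x + 1))"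
      using Suc by (simp add: x_def)
    also have "2 / (x + 1)\<^sup>2 \<le> 4 / (x + 1) - 4 / (x + 2)"
    proof -
      have "2 * (x + 1)\<^sup>2 - (x + 1) * (x + 2) = x * (x + 1)"
        by (simp add: power2_eq_square algebra_simps)
      then have "(x + 1) * (x + 2) \<le> 2 * (x + 1)\<^sup>2"
        using x by (smt (verit) mult_nonneg_nonneg)
      then have "4 / (2 * (x + 1)\<^sup>2) \<le> 4 / ((x + 1) * (x + 2))"
        using x by (intro divide_left_mono) auto
      also have "\<dots> = 4 / (x + 1) - 4 / (x + 2)"
        using x by (simp add: field_simps)
      finally show ?thesis by simp
    qed
    finally show ?case by (simp add: x_def add.commute)
  qed
  then show ?thesis by (smt (verit) divide_nonneg_nonneg of_nat_0_le_iff)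
qed

lemma inverse_norm_rvec_power_le_prod_weight:
  fixes l :: "int^'n"
  assumes "l \<noteq> 0"
  shows "1 / norm (rvec l) ^ (2 * CARD('n)) \<le> (\<Prod>i\<in>UNIV. inv_sq_weight (l $ i))"
proof -
  obtain j where "l $ j \<noteq> 0" using assms by (metis vec_eq_iff zero_index)
  then have "1 \<le> norm (rvec l)"
    using abs_component_le_norm_rvec[of l j] by linarith
  have "max 1 ((real_of_int (l $ i))\<^sup>2) \<le> (norm (rvec l))\<^sup>2" for i
  proof -
    have "\<bar>real_of_int (l $ i)\<bar>\<^sup>2 \<le> (norm (rvec l))\<^sup>2"
      by (rule power_mono[OF abs_component_le_norm_rvec abs_ge_zero])
    moreover have "1 \<le> (norm (rvec l))\<^sup>2"
      using \<open>1 \<le> norm (rvec l)\<close> by (simp add: one_le_power)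
    ultimately show ?thesis by simp
  qed
  then have "(\<Prod>i\<in>(UNIV::'n set). max 1 ((real_of_int (l $ i))\<^sup>2)) \<le> norm (rvec l) ^ (2 * CARD('n))"
    using prod_mono[of UNIV "\<lambda>i. max 1 ((real_of_int (l $ i))\<^sup>2)" "\<lambda>_. (norm (rvec l))\<^sup>2"]
    by (simp add: power_mult)
  moreover have "0 < (\<Prod>i\<in>(UNIV::'n set). max 1 ((real_of_int (l $ i))\<^sup>2))"
    by (rule prod_pos) auto
  ultimately show ?thesis
    by (simp add: inv_sq_weight_def prod_dividef frac_le)
qed

lemma sum_first_moment_le:
  fixes A :: "int^'n \<Rightarrow> 'a \<Rightarrow> real"
  assumes decay: "\<And>l z. norm (rvec l) ^ (2 * CARD('n) + 1) * \<bar>A l z\<bar> \<le> C"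
    and "finite F"
  shows "(\<Sum>l\<in>F. \<bar>A l (x l)\<bar> * norm (rvec l)) \<le> C * 5 ^ CARD('n)"
proof -
  have rvec0: "rvec (0::int^'n) = 0" by (simp add: rvec_def vec_eq_iff)
  have "0 \<le> C" using decay[of 0] by (simp add: rvec0)
  \<comment> \<open>\<open>|l|^(-2d)\<close> is dominated by a product weight whose sum over every box is at most \<open>5^d\<close>.\<close>
  have term_le: "\<bar>A l (x l)\<bar> * norm (rvec l) \<le> C * (\<Prod>i\<in>UNIV. inv_sq_weight (l $ i))" for l
  proof (cases "l = 0")
    case True
    then show ?thesis using \<open>0 \<le> C\<close> by (simp add: rvec0 inv_sq_weight_def prod_nonneg)
  next
    case False
    define \<rho> where "\<rho> = norm (rvec l) ^ (2 * CARD('n))"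
    have "0 < \<rho>"
      using False by (simp add: \<rho>_def rvec_def vec_eq_iff)
    have "\<bar>A l (x l)\<bar> * norm (rvec l) = (norm (rvec l) ^ (2 * CARD('n) + 1) * \<bar>A l (x l)\<bar>) / \<rho>"
      using \<open>0 < \<rho>\<close> by (simp add: \<rho>_def field_simps)
    also have "\<dots> \<le> C * (1 / \<rho>)"
      using decay[of l "x l"] \<open>0 < \<rho>\<close> by (simp add: divide_right_mono)
    also have "\<dots> \<le> C * (\<Prod>i\<in>UNIV. inv_sq_weight (l $ i))"
      using mult_left_mono[OF inverse_norm_rvec_power_le_prod_weight[OF False] \<open>0 \<le> C\<close>]
      by (simp add: \<rho>_def)
    finally show ?thesis .
  qed
  define N where "N = nat (Max (insert 0 ((\<lambda>(l, i). \<bar>l $ i\<bar>) ` (F \<times> UNIV))))"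
  have "F \<subseteq> lattice_box N"
    using \<open>finite F\<close> by (force simp: lattice_box_def N_def intro!: le_nat_iff[THEN iffD2] Max_ge)
  have "(\<Sum>l\<in>F. \<bar>A l (x l)\<bar> * norm (rvec l)) \<le> (\<Sum>l\<in>F. C * (\<Prod>i\<in>UNIV. inv_sq_weight (l $ i)))"
    by (rule sum_mono) (rule term_le)
  also have "\<dots> \<le> (\<Sum>l\<in>(lattice_box N :: (int^'n) set). C * (\<Prod>i\<in>UNIV. inv_sq_weight (l $ i)))"
    by (rule sum_mono2)
      (use \<open>F \<subseteq> lattice_box N\<close> \<open>0 \<le> C\<close> in \<open>auto simp: finite_lattice_box inv_sq_weight_def prod_nonneg\<close>)
  also have "\<dots> = C * (\<Prod>i\<in>(UNIV::'n set). \<Sum>t\<in>{-int N..int N}. inv_sq_weight t)"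
    by (simp add: sum_distrib_left[symmetric] sum_lattice_box_prod)
  also have "\<dots> \<le> C * 5 ^ CARD('n)"
    using prod_mono[of UNIV "\<lambda>_. \<Sum>t\<in>{-int N..int N}. inv_sq_weight t" "\<lambda>_. 5"]
      sum_inv_sq_weight_le \<open>0 \<le> C\<close>
    by (simp add: mult_left_mono sum_nonneg inv_sq_weight_def)
  finally show ?thesis .
qed

section \<open>Localization to windows and cubes\<close>

lemma schur_test:
  fixes c :: "'a \<Rightarrow> 'a \<Rightarrow> real"
  assumes "finite P" and c_nonneg: "\<And>m k. 0 \<le> c m k"
    and col: "\<And>k. (\<Sum>m\<in>P. c m k) \<le> B" and row: "\<And>m. (\<Sum>k\<in>P. c m k) \<le> B"
  shows "(\<Sum>k\<in>P. \<Sum>m\<in>P. c m k * \<bar>f m\<bar> * \<bar>f k\<bar>) \<le> B * (\<Sum>k\<in>P. (f k)\<^sup>2)"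
proof -
  have amgm: "\<bar>f m\<bar> * \<bar>f k\<bar> \<le> (f m)\<^sup>2 / 2 + (f k)\<^sup>2 / 2" for m k
    using sum_squares_bound[of "\<bar>f m\<bar>" "\<bar>f k\<bar>"] by simp
  have "(\<Sum>k\<in>P. \<Sum>m\<in>P. c m k * \<bar>f m\<bar> * \<bar>f k\<bar>)
      \<le> (\<Sum>k\<in>P. \<Sum>m\<in>P. c m k * ((f m)\<^sup>2 / 2) + c m k * ((f k)\<^sup>2 / 2))"
  proof (intro sum_mono)
    fix k m
    have "c m k * (\<bar>f m\<bar> * \<bar>f k\<bar>) \<le> c m k * ((f m)\<^sup>2 / 2 + (f k)\<^sup>2 / 2)"
      by (rule mult_left_mono[OF amgm c_nonneg])
    then show "c m k * \<bar>f m\<bar> * \<bar>f k\<bar> \<le> c m k * ((f m)\<^sup>2 / 2) + c m k * ((f k)\<^sup>2 / 2)"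
      by (simp add: algebra_simps)
  qed
  also have "\<dots> = (\<Sum>m\<in>P. (\<Sum>k\<in>P. c m k) * ((f m)\<^sup>2 / 2)) + (\<Sum>k\<in>P. (\<Sum>m\<in>P. c m k) * ((f k)\<^sup>2 / 2))"
  proof -
    have "(\<Sum>k\<in>P. \<Sum>m\<in>P. c m k * ((f m)\<^sup>2 / 2)) = (\<Sum>m\<in>P. (\<Sum>k\<in>P. c m k) * ((f m)\<^sup>2 / 2))"
      by (subst sum.swap) (simp only: sum_distrib_right)
    moreover have "(\<Sum>k\<in>P. \<Sum>m\<in>P. c m k * ((f k)\<^sup>2 / 2)) = (\<Sum>k\<in>P. (\<Sum>m\<in>P. c m k) * ((f k)\<^sup>2 / 2))"
      by (simp only: sum_distrib_right)
    ultimately show ?thesis by (simp only: sum.distrib)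
  qed
  also have "\<dots> \<le> (\<Sum>m\<in>P. B * ((f m)\<^sup>2 / 2)) + (\<Sum>k\<in>P. B * ((f k)\<^sup>2 / 2))"
    by (intro add_mono sum_mono mult_right_mono row col) auto
  also have "\<dots> = B * (\<Sum>k\<in>P. (f k)\<^sup>2)"
    by (simp add: sum_distrib_left)
  finally show ?thesis .
qed

lemma exists_le_ratio_of_sums:
  fixes g h :: "'a \<Rightarrow> real"
  assumes "finite T" and le: "(\<Sum>t\<in>T. g t) \<le> \<rho> * (\<Sum>t\<in>T. h t)"
    and h_nonneg: "\<And>t. 0 \<le> h t" and "0 < (\<Sum>t\<in>T. h t)"
    and g_zero: "\<And>t. h t = 0 \<Longrightarrow> g t = 0"
  shows "\<exists>t. 0 < h t \<and> g t \<le> \<rho> * h t"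
proof (rule ccontr)
  assume "\<not> ?thesis"
  then have gt: "\<rho> * h t < g t" if "0 < h t" for t
    using that by auto
  have ge: "\<rho> * h t \<le> g t" for t
  proof (cases "h t = 0")
    case True
    then show ?thesis using g_zero by simp
  next
    case False
    then have "0 < h t" using h_nonneg[of t] by linarith
    then show ?thesis using gt by (simp add: less_imp_le)
  qed
  have "\<exists>t\<in>T. h t \<noteq> 0"
  proof (rule ccontr)
    assume "\<not> (\<exists>t\<in>T. h t \<noteq> 0)"
    then have "(\<Sum>t\<in>T. h t) = 0" by simp
    with \<open>0 < (\<Sum>t\<in>T. h t)\<close> show False by simp
  qed
  then obtain t0 where "t0 \<in> T" "0 < h t0"
    using h_nonneg by (auto simp: less_le)
  then have "(\<Sum>t\<in>T. \<rho> * h t) < (\<Sum>t\<in>T. g t)"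
    using \<open>finite T\<close> ge gt by (intro sum_strict_mono_ex1) auto
  with le show False by (simp add: sum_distrib_left)
qed

lemma sum_window_overlap:
  fixes a b r :: int and T :: "int set"
  assumes "finite T" "{b - r + 1 .. b} \<subseteq> T"
  shows "(\<Sum>t\<in>T. of_bool (t \<le> a \<and> a < t + r \<and> t \<le> b \<and> b < t + r) :: real) = real (nat (r - \<bar>a - b\<bar>))"
proof -
  have "T \<inter> {t. t \<le> a \<and> a < t + r \<and> t \<le> b \<and> b < t + r} = {max a b - r + 1 .. min a b}"
  proof (intro set_eqI iffI)
    fix t assume "t \<in> {max a b - r + 1 .. min a b}"
    then show "t \<in> T \<inter> {t. t \<le> a \<and> a < t + r \<and> t \<le> b \<and> b < t + r}"
      using assms(2) by auto
  qed auto
  then have "(\<Sum>t\<in>T. of_bool (t \<le> a \<and> a < t + r \<and> t \<le> b \<and> b < t + r) :: real)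
      = real (card {max a b - r + 1 .. min a b})"
    using assms(1) by simp
  also have "card {max a b - r + 1 .. min a b} = nat (r - \<bar>a - b\<bar>)"
  proof -
    have "min a b - (max a b - r + 1) + 1 = r - \<bar>a - b\<bar>" by (simp add: max_def min_def abs_if)
    then show ?thesis by simp
  qed
  finally show ?thesis .
qed

definition window_cutoff :: "'n \<Rightarrow> int \<Rightarrow> int \<Rightarrow> (int^'n \<Rightarrow> real) \<Rightarrow> int^'n \<Rightarrow> real" where
  "window_cutoff i r t \<phi> k = (if t \<le> k $ i \<and> k $ i < t + r then \<phi> k else 0)"

definition window_overlap :: "'n \<Rightarrow> int \<Rightarrow> int set \<Rightarrow> int^'n \<Rightarrow> int^'n \<Rightarrow> real" where
  "window_overlap i r T m k =
     (\<Sum>t\<in>T. of_bool (t \<le> m $ i \<and> m $ i < t + r \<and> t \<le> k $ i \<and> k $ i < t + r))"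

definition window_starts :: "'n \<Rightarrow> int \<Rightarrow> (int^'n) set \<Rightarrow> int set" where
  "window_starts i r P = (\<Union>k\<in>P. {k $ i - r + 1 .. k $ i})"

lemma sum_window_cutoff_mult:
  "(\<Sum>t\<in>T. window_cutoff i r t \<phi> m * window_cutoff i r t \<phi> k) = window_overlap i r T m k * \<phi> m * \<phi> k"
  unfolding window_overlap_def sum_distrib_right
  by (rule sum.cong) (auto simp: window_cutoff_def)

lemma window_overlap_window_starts:
  assumes "finite P" "k \<in> P"
  shows "window_overlap i r (window_starts i r P) m k = real (nat (r - \<bar>m $ i - k $ i\<bar>))"
proof -
  have "{k $ i - r + 1 .. k $ i} \<subseteq> window_starts i r P"
    using assms(2) by (auto simp: window_starts_def)
  then show ?thesis
    using sum_window_overlap[of "window_starts i r P" "k $ i" r "m $ i"] assms(1)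
    by (simp add: window_overlap_def window_starts_def)
qed

lemma sum_quad_form_window_cutoff:
  "(\<Sum>t\<in>T. lattice_quad_form A W P (window_cutoff i r t \<phi>)) =
     (\<Sum>k\<in>P. \<Sum>m\<in>P. A (m - k) k * \<phi> m * \<phi> k * window_overlap i r T m k) +
     (\<Sum>k\<in>P. W k * (\<phi> k)\<^sup>2 * window_overlap i r T k k)"
proof -
  have "(\<Sum>t\<in>T. lattice_quad_form A W P (window_cutoff i r t \<phi>)) =
      (\<Sum>k\<in>P. \<Sum>m\<in>P. A (m - k) k * (\<Sum>t\<in>T. window_cutoff i r t \<phi> m * window_cutoff i r t \<phi> k)) +
      (\<Sum>k\<in>P. W k * (\<Sum>t\<in>T. window_cutoff i r t \<phi> k * window_cutoff i r t \<phi> k))"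
    unfolding lattice_quad_form_def sum.distrib
    by (simp only: sum.swap[of _ P T]) (simp add: sum_distrib_left power2_eq_square mult.assoc)
  then show ?thesis
    by (simp only: sum_window_cutoff_mult) (simp add: power2_eq_square mult_ac)
qed

text \<open>Averaging over the windows reproduces the form of \<open>\<phi>\<close> up to the overlap defect, which is
  at most \<open>|m - k|\<close>; the Schur test bounds its contribution by the first moment of \<open>A\<close>.\<close>

lemma sum_quad_form_window_cutoff_le:
  fixes A :: "int^'n \<Rightarrow> int^'n \<Rightarrow> real" and \<phi> :: "int^'n \<Rightarrow> real"
  assumes P: "finite P"
    and moment: "\<And>F x. finite F \<Longrightarrow> (\<Sum>l\<in>F. \<bar>A l (x l)\<bar> * norm (rvec l)) \<le> B"
    and r: "1 \<le> r"
  shows "(\<Sum>t\<in>window_starts i r P. lattice_quad_form A W P (window_cutoff i r t \<phi>)) \<le>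
    r * lattice_quad_form A W P \<phi> + B * (\<Sum>k\<in>P. (\<phi> k)\<^sup>2)"
proof -
  define N where "N = window_overlap i r (window_starts i r P)"
  define c where "c m k = \<bar>A (m - k) k\<bar> * norm (rvec (m - k))" for m k
  have N_diag: "N k k = r" if "k \<in> P" for k
    using window_overlap_window_starts[OF P that] r by (simp add: N_def)
  have N_defect: "\<bar>N m k - r\<bar> \<le> norm (rvec (m - k))" if "k \<in> P" for m k
  proof -
    have "\<bar>N m k - r\<bar> \<le> \<bar>real_of_int (m $ i - k $ i)\<bar>"
      using window_overlap_window_starts[OF P that, of i r m] r
      by (cases "\<bar>m $ i - k $ i\<bar> \<le> r") (auto simp: N_def)
    also have "\<dots> \<le> norm (rvec (m - k))"
      using abs_component_le_norm_rvec[of "m - k" i] by simp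
    finally show ?thesis .
  qed
  have "(\<Sum>t\<in>window_starts i r P. lattice_quad_form A W P (window_cutoff i r t \<phi>)) -
      r * lattice_quad_form A W P \<phi> = (\<Sum>k\<in>P. \<Sum>m\<in>P. A (m - k) k * \<phi> m * \<phi> k * (N m k - r))"
    unfolding sum_quad_form_window_cutoff N_def[symmetric]
    by (simp add: lattice_quad_form_def N_diag sum_distrib_left sum_subtractf[symmetric] algebra_simps)
  also have "\<dots> \<le> (\<Sum>k\<in>P. \<Sum>m\<in>P. c m k * \<bar>\<phi> m\<bar> * \<bar>\<phi> k\<bar>)"
  proof (intro sum_mono)
    fix k m assume "k \<in> P"
    have "A (m - k) k * \<phi> m * \<phi> k * (N m k - r) \<le> \<bar>A (m - k) k\<bar> * \<bar>\<phi> m\<bar> * \<bar>\<phi> k\<bar> * \<bar>N m k - r\<bar>"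
      by (simp add: abs_mult[symmetric])
    also have "\<dots> \<le> \<bar>A (m - k) k\<bar> * \<bar>\<phi> m\<bar> * \<bar>\<phi> k\<bar> * norm (rvec (m - k))"
      by (intro mult_left_mono N_defect[OF \<open>k \<in> P\<close>]) auto
    finally show "A (m - k) k * \<phi> m * \<phi> k * (N m k - r) \<le> c m k * \<bar>\<phi> m\<bar> * \<bar>\<phi> k\<bar>"
      by (simp add: c_def mult_ac)
  qed
  also have "\<dots> \<le> B * (\<Sum>k\<in>P. (\<phi> k)\<^sup>2)"
  proof (rule schur_test[OF P])
    fix k
    have "(\<Sum>m\<in>P. c m k) = (\<Sum>l\<in>(\<lambda>m. m - k) ` P. \<bar>A l ((\<lambda>_. k) l)\<bar> * norm (rvec l))"
      unfolding c_def by (subst sum.reindex) (auto simp: inj_on_def)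
    then show "(\<Sum>m\<in>P. c m k) \<le> B" using moment P by simp
  next
    fix m
    have "(\<Sum>k\<in>P. c m k) = (\<Sum>l\<in>(\<lambda>k. m - k) ` P. \<bar>A l ((\<lambda>l. m - l) l)\<bar> * norm (rvec l))"
      unfolding c_def by (subst sum.reindex) (auto simp: inj_on_def)
    then show "(\<Sum>k\<in>P. c m k) \<le> B" using moment P by simp
  qed (simp add: c_def)
  finally show ?thesis by simp
qed

lemma sum_window_cutoff_sq:
  assumes "finite P" "1 \<le> r"
  shows "(\<Sum>t\<in>window_starts i r P. \<Sum>k\<in>P. (window_cutoff i r t \<phi> k)\<^sup>2) = r * (\<Sum>k\<in>P. (\<phi> k)\<^sup>2)"
proof -
  have "(\<Sum>t\<in>window_starts i r P. \<Sum>k\<in>P. (window_cutoff i r t \<phi> k)\<^sup>2) =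
      (\<Sum>k\<in>P. window_overlap i r (window_starts i r P) k k * \<phi> k * \<phi> k)"
    by (subst sum.swap) (simp add: power2_eq_square sum_window_cutoff_mult)
  also have "\<dots> = r * (\<Sum>k\<in>P. (\<phi> k)\<^sup>2)"
    using window_overlap_window_starts[OF assms(1)] assms(2)
    by (simp add: sum_distrib_left power2_eq_square mult.assoc)
  finally show ?thesis .
qed

lemma exists_window_cutoff_quad_form_le:
  fixes A :: "int^'n \<Rightarrow> int^'n \<Rightarrow> real" and \<phi> :: "int^'n \<Rightarrow> real"
  assumes P: "finite P" and nz: "0 < (\<Sum>k\<in>P. (\<phi> k)\<^sup>2)"
    and moment: "\<And>F x. finite F \<Longrightarrow> (\<Sum>l\<in>F. \<bar>A l (x l)\<bar> * norm (rvec l)) \<le> B"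
    and r: "1 \<le> r"
  shows "\<exists>t. 0 < (\<Sum>k\<in>P. (window_cutoff i r t \<phi> k)\<^sup>2) \<and>
     lattice_quad_form A W P (window_cutoff i r t \<phi>) \<le>
       (lattice_quad_form A W P \<phi> / (\<Sum>k\<in>P. (\<phi> k)\<^sup>2) + B / r) * (\<Sum>k\<in>P. (window_cutoff i r t \<phi> k)\<^sup>2)"
proof (rule exists_le_ratio_of_sums)
  show "finite (window_starts i r P)" using P by (simp add: window_starts_def)
  have "(\<Sum>t\<in>window_starts i r P. lattice_quad_form A W P (window_cutoff i r t \<phi>)) \<le>
      r * lattice_quad_form A W P \<phi> + B * (\<Sum>k\<in>P. (\<phi> k)\<^sup>2)"
    by (rule sum_quad_form_window_cutoff_le[OF P moment r])
  also have "\<dots> = (lattice_quad_form A W P \<phi> / (\<Sum>k\<in>P. (\<phi> k)\<^sup>2) + B / r) * (r * (\<Sum>k\<in>P. (\<phi> k)\<^sup>2))"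
    using nz r by (simp add: field_simps)
  also have "r * (\<Sum>k\<in>P. (\<phi> k)\<^sup>2) = (\<Sum>t\<in>window_starts i r P. \<Sum>k\<in>P. (window_cutoff i r t \<phi> k)\<^sup>2)"
    by (rule sum_window_cutoff_sq[OF P r, symmetric])
  finally show "(\<Sum>t\<in>window_starts i r P. lattice_quad_form A W P (window_cutoff i r t \<phi>)) \<le>
      (lattice_quad_form A W P \<phi> / (\<Sum>k\<in>P. (\<phi> k)\<^sup>2) + B / r) *
      (\<Sum>t\<in>window_starts i r P. \<Sum>k\<in>P. (window_cutoff i r t \<phi> k)\<^sup>2)" .
  show "0 < (\<Sum>t\<in>window_starts i r P. \<Sum>k\<in>P. (window_cutoff i r t \<phi> k)\<^sup>2)"
    using sum_window_cutoff_sq[OF P r] nz r by simp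
  fix t
  assume "(\<Sum>k\<in>P. (window_cutoff i r t \<phi> k)\<^sup>2) = 0"
  then have "window_cutoff i r t \<phi> k = 0" if "k \<in> P" for k
    using sum_nonneg_eq_0_iff[OF P, of "\<lambda>k. (window_cutoff i r t \<phi> k)\<^sup>2"] that by simp
  then show "lattice_quad_form A W P (window_cutoff i r t \<phi>) = 0"
    by (simp add: lattice_quad_form_def)
qed (simp add: sum_nonneg)

lemma exists_cube_cutoff_quad_form_le:
  fixes A :: "int^'n \<Rightarrow> int^'n \<Rightarrow> real" and \<phi> :: "int^'n \<Rightarrow> real" and J :: "'n set"
  assumes P: "finite P" and nz: "0 < (\<Sum>k\<in>P. (\<phi> k)\<^sup>2)"
    and moment: "\<And>F x. finite F \<Longrightarrow> (\<Sum>l\<in>F. \<bar>A l (x l)\<bar> * norm (rvec l)) \<le> B"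
    and r: "1 \<le> r" and "finite J"
  shows "\<exists>\<psi> t. (\<forall>k. \<psi> k \<noteq> 0 \<longrightarrow> \<phi> k \<noteq> 0 \<and> (\<forall>j\<in>J. t j \<le> k $ j \<and> k $ j < t j + r)) \<and>
     0 < (\<Sum>k\<in>P. (\<psi> k)\<^sup>2) \<and>
     lattice_quad_form A W P \<psi> / (\<Sum>k\<in>P. (\<psi> k)\<^sup>2) \<le>
       lattice_quad_form A W P \<phi> / (\<Sum>k\<in>P. (\<phi> k)\<^sup>2) + real (card J) * B / r"
  using \<open>finite J\<close>
proof (induction J rule: finite_induct)
  case empty
  show ?case using nz by (intro exI[of _ \<phi>]) simp
next
  case (insert j J)
  then obtain \<psi> t where
    supp: "\<forall>k. \<psi> k \<noteq> 0 \<longrightarrow> \<phi> k \<noteq> 0 \<and> (\<forall>j\<in>J. t j \<le> k $ j \<and> k $ j < t j + r)" and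
    pos: "0 < (\<Sum>k\<in>P. (\<psi> k)\<^sup>2)" and
    ratio: "lattice_quad_form A W P \<psi> / (\<Sum>k\<in>P. (\<psi> k)\<^sup>2) \<le>
      lattice_quad_form A W P \<phi> / (\<Sum>k\<in>P. (\<phi> k)\<^sup>2) + real (card J) * B / r"
    by blast
  obtain s where
    pos': "0 < (\<Sum>k\<in>P. (window_cutoff j r s \<psi> k)\<^sup>2)" and
    le': "lattice_quad_form A W P (window_cutoff j r s \<psi>) \<le>
      (lattice_quad_form A W P \<psi> / (\<Sum>k\<in>P. (\<psi> k)\<^sup>2) + B / r) * (\<Sum>k\<in>P. (window_cutoff j r s \<psi> k)\<^sup>2)"
    using exists_window_cutoff_quad_form_le[where A=A and W=W and i=j, OF P pos moment r] by blast
  have "lattice_quad_form A W P (window_cutoff j r s \<psi>) / (\<Sum>k\<in>P. (window_cutoff j r s \<psi> k)\<^sup>2) \<le>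
      lattice_quad_form A W P \<phi> / (\<Sum>k\<in>P. (\<phi> k)\<^sup>2) + real (card (insert j J)) * B / r"
  proof -
    have "lattice_quad_form A W P (window_cutoff j r s \<psi>) / (\<Sum>k\<in>P. (window_cutoff j r s \<psi> k)\<^sup>2) \<le>
        lattice_quad_form A W P \<psi> / (\<Sum>k\<in>P. (\<psi> k)\<^sup>2) + B / r"
      using le' pos' by (simp add: pos_divide_le_eq)
    also have "\<dots> \<le> lattice_quad_form A W P \<phi> / (\<Sum>k\<in>P. (\<phi> k)\<^sup>2) + real (card J) * B / r + B / r"
      using ratio by simp
    also have "\<dots> = lattice_quad_form A W P \<phi> / (\<Sum>k\<in>P. (\<phi> k)\<^sup>2) + real (card (insert j J)) * B / r"
      using insert.hyps by (simp add: add_divide_distrib distrib_right)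
    finally show ?thesis .
  qed
  moreover have "\<forall>k. window_cutoff j r s \<psi> k \<noteq> 0 \<longrightarrow> \<phi> k \<noteq> 0 \<and>
      (\<forall>j'\<in>insert j J. (t(j := s)) j' \<le> k $ j' \<and> k $ j' < (t(j := s)) j' + r)"
    using supp insert.hyps(2) by (auto simp: window_cutoff_def split: if_splits)
  ultimately show ?case using pos' by blast
qed

section \<open>Comparison of the two thresholds\<close>

lemma dist_cube_corner_less:
  fixes t :: "'n::finite \<Rightarrow> int" and k :: "int^'n"
  assumes "0 < e" and cube: "\<And>j. t j \<le> k $ j \<and> k $ j < t j + r"
  shows "dist (e *\<^sub>R rvec (\<chi> j. t j)) (e *\<^sub>R rvec k) < e * real CARD('n) * r"
proof -
  let ?x = "\<chi> j. t j"
  have "norm (rvec ?x - rvec k) \<le> (\<Sum>j\<in>UNIV. \<bar>(rvec ?x - rvec k) $ j\<bar>)"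
    by (rule norm_le_l1_cart)
  also have "\<dots> \<le> (\<Sum>j\<in>(UNIV::'n set). real_of_int (r - 1))"
  proof (rule sum_mono)
    fix j
    have "\<bar>t j - k $ j\<bar> \<le> r - 1" using cube[of j] by auto
    then show "\<bar>(rvec ?x - rvec k) $ j\<bar> \<le> real_of_int (r - 1)"
      by (simp add: rvec_def)
  qed
  finally have "norm (rvec ?x - rvec k) \<le> real CARD('n) * (r - 1)" by simp
  then have "dist (e *\<^sub>R rvec ?x) (e *\<^sub>R rvec k) \<le> e * (real CARD('n) * (r - 1))"
    using \<open>0 < e\<close> by (simp add: dist_norm scaleR_diff_right[symmetric] mult_left_mono)
  also have "\<dots> < e * real CARD('n) * r"
    using \<open>0 < e\<close> by (simp add: algebra_simps)
  finally show ?thesis .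
qed

lemma LambdaR_le_rayleigh:
  assumes "\<phi> \<in> c0 (lball e x R)" "\<phi> \<noteq> (\<lambda>_. 0)"
  shows "LambdaR a V e R x \<le> ereal (rayleigh a V e \<phi>)"
  unfolding LambdaR_def using assms by (intro INF_lower) auto

lemma exists_far_LambdaR_le_rayleigh:
  fixes a :: "int^'n \<Rightarrow> real^'n \<Rightarrow> real \<Rightarrow> real" and \<phi> :: "int^'n \<Rightarrow> real" and r :: int
  assumes "0 < e"
    and moment: "\<And>F x. finite F \<Longrightarrow> (\<Sum>l\<in>F. \<bar>a l (e *\<^sub>R rvec (x l)) e\<bar> * norm (rvec l)) \<le> B"
    and r: "1 \<le> r" and R: "e * real CARD('n) * r \<le> R"
    and \<phi>: "\<phi> \<in> c0 (UNIV - {k. norm (e *\<^sub>R rvec k) < M + R})" "\<phi> \<noteq> (\<lambda>_. 0)"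
  shows "\<exists>x. M \<le> norm (e *\<^sub>R rvec x) \<and>
    LambdaR a V e R x \<le> ereal (rayleigh a V e \<phi> + real CARD('n) * B / r)"
proof -
  define P where "P = {k. \<phi> k \<noteq> 0}"
  have "finite P" using \<phi>(1) by (simp add: c0_def P_def)
  obtain k1 where "\<phi> k1 \<noteq> 0" using \<phi>(2) by auto
  then have nz: "0 < (\<Sum>k\<in>P. (\<phi> k)\<^sup>2)"
    using \<open>finite P\<close> by (intro sum_pos2[of P k1]) (auto simp: P_def)
  define A where "A l k = a l (e *\<^sub>R rvec k) e" for l k
  define W where "W k = V e (e *\<^sub>R rvec k)" for k
  have moment_A: "\<And>F x. finite F \<Longrightarrow> (\<Sum>l\<in>F. \<bar>A l (x l)\<bar> * norm (rvec l)) \<le> B"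
    using moment by (simp add: A_def)
  obtain \<psi> t where
    supp: "\<And>k. \<psi> k \<noteq> 0 \<Longrightarrow> \<phi> k \<noteq> 0 \<and> (\<forall>j. t j \<le> k $ j \<and> k $ j < t j + r)" and
    pos: "0 < (\<Sum>k\<in>P. (\<psi> k)\<^sup>2)" and
    ratio: "lattice_quad_form A W P \<psi> / (\<Sum>k\<in>P. (\<psi> k)\<^sup>2) \<le>
      lattice_quad_form A W P \<phi> / (\<Sum>k\<in>P. (\<phi> k)\<^sup>2) + real CARD('n) * B / r"
    using exists_cube_cutoff_quad_form_le[where A=A and W=W and J=UNIV, OF \<open>finite P\<close> nz moment_A r] by auto
  have "\<psi> k = 0" if "k \<notin> P" for k using supp that by (auto simp: P_def)
  then have "rayleigh a V e \<psi> = lattice_quad_form A W P \<psi> / (\<Sum>k\<in>P. (\<psi> k)\<^sup>2)"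
    unfolding A_def W_def by (rule rayleigh_finite_support[OF \<open>finite P\<close>])
  moreover have "rayleigh a V e \<phi> = lattice_quad_form A W P \<phi> / (\<Sum>k\<in>P. (\<phi> k)\<^sup>2)"
    unfolding A_def W_def by (rule rayleigh_finite_support[OF \<open>finite P\<close>]) (simp add: P_def)
  ultimately have rayleigh_\<psi>: "rayleigh a V e \<psi> \<le> rayleigh a V e \<phi> + real CARD('n) * B / r"
    using ratio by simp
  define x :: "int^'n" where "x = (\<chi> j. t j)"
  have dist: "dist (e *\<^sub>R rvec x) (e *\<^sub>R rvec k) < R" if "\<psi> k \<noteq> 0" for k
    using dist_cube_corner_less[OF \<open>0 < e\<close>, of t k r] supp[OF that] R by (simp add: x_def)
  have "\<exists>k. \<psi> k \<noteq> 0"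
  proof (rule ccontr)
    assume "\<not> (\<exists>k. \<psi> k \<noteq> 0)"
    then have "(\<Sum>k\<in>P. (\<psi> k)\<^sup>2) = 0" by simp
    with pos show False by simp
  qed
  then obtain k0 where "\<psi> k0 \<noteq> 0" by blast
  have "\<psi> \<in> c0 (lball e x R)"
    using supp dist \<open>finite P\<close> unfolding c0_def lball_def by (auto intro: finite_subset[of _ P] simp: P_def)
  moreover have "\<psi> \<noteq> (\<lambda>_. 0)" using \<open>\<psi> k0 \<noteq> 0\<close> by auto
  ultimately have "LambdaR a V e R x \<le> ereal (rayleigh a V e \<psi>)"
    by (rule LambdaR_le_rayleigh)
  moreover have "M \<le> norm (e *\<^sub>R rvec x)"
  proof -
    have "M + R \<le> norm (e *\<^sub>R rvec k0)"
      using \<phi>(1) supp[OF \<open>\<psi> k0 \<noteq> 0\<close>] by (auto simp: c0_def)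
    also have "\<dots> \<le> norm (e *\<^sub>R rvec x) + dist (e *\<^sub>R rvec x) (e *\<^sub>R rvec k0)"
      by (metis dist_commute dist_norm norm_triangle_sub)
    finally show ?thesis using dist[OF \<open>\<psi> k0 \<noteq> 0\<close>] by linarith
  qed
  ultimately show ?thesis
    using rayleigh_\<psi> by (intro exI[of _ x]) (auto intro: order.trans)
qed

lemma Liminf_at_infty_lat_le:
  fixes f :: "int^'n \<Rightarrow> ereal"
  assumes far: "\<And>M y. c < y \<Longrightarrow> \<exists>k. M \<le> norm (e *\<^sub>R rvec k) \<and> f k < y"
  shows "Liminf (at_infty_lat e) f \<le> c"
proof (rule ccontr)
  assume "\<not> ?thesis"
  then have "c < Liminf (at_infty_lat e) f" by (simp add: not_le)
  then obtain y where "c < y" "y < Liminf (at_infty_lat e) f"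
    using dense by blast
  then have "eventually (\<lambda>k. y < f k) (at_infty_lat e)"
    using le_Liminf_iff[of "Liminf (at_infty_lat e) f" "at_infty_lat e" f] by auto
  then obtain M where M: "\<And>k. M \<le> norm (e *\<^sub>R rvec k) \<Longrightarrow> y < f k"
    unfolding at_infty_lat_def eventually_filtercomap eventually_at_top_linorder by blast
  obtain k where "M \<le> norm (e *\<^sub>R rvec k)" "f k < y"
    using far[OF \<open>c < y\<close>] by blast
  with M show False by (meson less_asym)
qed

lemma Liminf_LambdaR_le_Sigma_ess:
  fixes a :: "int^'n \<Rightarrow> real^'n \<Rightarrow> real \<Rightarrow> real" and r :: int
  assumes "0 < e"
    and moment: "\<And>F x. finite F \<Longrightarrow> (\<Sum>l\<in>F. \<bar>a l (e *\<^sub>R rvec (x l)) e\<bar> * norm (rvec l)) \<le> B"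
    and r: "1 \<le> r" and R: "e * real CARD('n) * r \<le> R"
  shows "Liminf (at_infty_lat e) (LambdaR a V e R) \<le> Sigma_ess a V e + ereal (real CARD('n) * B / r)"
proof (rule Liminf_at_infty_lat_le)
  define \<eta> where "\<eta> = real CARD('n) * B / r"
  fix M y
  assume "Sigma_ess a V e + ereal (real CARD('n) * B / r) < y"
  then obtain z where z: "Sigma_ess a V e + ereal \<eta> < ereal z" "ereal z < y"
    using ereal_dense2 by (auto simp: \<eta>_def)
  define K where "K = {k::int^'n. norm (e *\<^sub>R rvec k) < M + R}"
  have "finite K" using finite_lattice_norm_less[OF \<open>0 < e\<close>] by (simp add: K_def)
  define I where "I = (INF \<phi>\<in>{\<phi>\<in>c0 (UNIV - K). \<phi> \<noteq> (\<lambda>_. 0)}. ereal (rayleigh a V e \<phi>))"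
  have "I \<le> Sigma_ess a V e"
    unfolding I_def Sigma_ess_def using \<open>finite K\<close> by (intro SUP_upper) simp
  with z(1) have "I < ereal (z - \<eta>)"
    by (cases I; cases "Sigma_ess a V e") auto
  then obtain \<phi> where \<phi>: "\<phi> \<in> c0 (UNIV - K)" "\<phi> \<noteq> (\<lambda>_. 0)" and "rayleigh a V e \<phi> < z - \<eta>"
    unfolding I_def INF_less_iff by auto
  then obtain k where "M \<le> norm (e *\<^sub>R rvec k)" "LambdaR a V e R k \<le> ereal (rayleigh a V e \<phi> + \<eta>)"
    using exists_far_LambdaR_le_rayleigh[where a=a, OF \<open>0 < e\<close> moment r R, of \<phi> M V] by (auto simp: K_def \<eta>_def)
  moreover have "ereal (rayleigh a V e \<phi> + \<eta>) < ereal z"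
    using \<open>rayleigh a V e \<phi> < z - \<eta>\<close> by simp
  with z(2) have "ereal (rayleigh a V e \<phi> + \<eta>) < y" by (rule less_trans[rotated])
  ultimately show "\<exists>k. M \<le> norm (e *\<^sub>R rvec k) \<and> LambdaR a V e R k < y"
    by (auto intro: order.strict_trans1)
qed

lemma Sigma_ess_le_Liminf_LambdaR:
  fixes a :: "int^'n \<Rightarrow> real^'n \<Rightarrow> real \<Rightarrow> real"
  shows "Sigma_ess a V e \<le> Liminf (at_infty_lat e) (LambdaR a V e R)"
  unfolding Sigma_ess_def
proof (rule SUP_least, rule Liminf_bounded)
  fix K :: "(int^'n) set"
  assume "K \<in> {K. finite K}"
  define D where "D = Max (insert 0 ((\<lambda>k. norm (e *\<^sub>R rvec k)) ` K))"
  have D: "norm (e *\<^sub>R rvec k) \<le> D" if "k \<in> K" for k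
    unfolding D_def using \<open>K \<in> {K. finite K}\<close> that by (intro Max_ge) auto
  have "lball e x R \<subseteq> UNIV - K" if x: "D + R \<le> norm (e *\<^sub>R rvec x)" for x
  proof (intro subsetI DiffI UNIV_I notI)
    fix l assume "l \<in> lball e x R" "l \<in> K"
    moreover have "norm (e *\<^sub>R rvec x) \<le> norm (e *\<^sub>R rvec l) + dist (e *\<^sub>R rvec x) (e *\<^sub>R rvec l)"
      by (metis dist_norm norm_triangle_sub add.commute)
    ultimately show False using x D[of l] by (simp add: lball_def)
  qed
  then have "(INF \<phi>\<in>{\<phi>\<in>c0 (UNIV - K). \<phi> \<noteq> (\<lambda>_. 0)}. ereal (rayleigh a V e \<phi>)) \<le> LambdaR a V e R x"
    if "D + R \<le> norm (e *\<^sub>R rvec x)" for x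
    unfolding LambdaR_def using that by (intro INF_superset_mono) (auto simp: c0_def)
  then show "eventually (\<lambda>x. (INF \<phi>\<in>{\<phi>\<in>c0 (UNIV - K). \<phi> \<noteq> (\<lambda>_. 0)}. ereal (rayleigh a V e \<phi>))
      \<le> LambdaR a V e R x) (at_infty_lat e)"
    unfolding at_infty_lat_def eventually_filtercomap by (blast intro: eventually_ge_at_top)
qed

lemma eventually_Liminf_LambdaR_le_Sigma_ess:
  fixes a :: "int^'n \<Rightarrow> real^'n \<Rightarrow> real \<Rightarrow> real"
  assumes "0 < e" "0 < \<delta>"
    and moment: "\<And>F x. finite F \<Longrightarrow> (\<Sum>l\<in>F. \<bar>a l (e *\<^sub>R rvec (x l)) e\<bar> * norm (rvec l)) \<le> B"
  shows "eventually (\<lambda>R. Liminf (at_infty_lat e) (LambdaR a V e R) \<le> Sigma_ess a V e + ereal \<delta>) at_top"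
proof -
  define r where "r = max 1 \<lceil>real CARD('n) * B / \<delta>\<rceil>"
  have "1 \<le> r" by (simp add: r_def)
  have "real CARD('n) * B / \<delta> \<le> r"
    unfolding r_def by (meson le_of_int_ceiling max.cobounded2 of_int_le_iff order.trans)
  then have "real CARD('n) * B / r \<le> \<delta>"
    using \<open>0 < \<delta>\<close> \<open>1 \<le> r\<close> by (simp add: divide_le_eq mult.commute)
  then have "Liminf (at_infty_lat e) (LambdaR a V e R) \<le> Sigma_ess a V e + ereal \<delta>"
    if "e * real CARD('n) * r \<le> R" for R
    using Liminf_LambdaR_le_Sigma_ess[where a=a and V=V, OF \<open>0 < e\<close> moment \<open>1 \<le> r\<close> that]
    by (meson add_left_mono ereal_less_eq(3) order.trans)
  then show ?thesis
    using eventually_ge_at_top by (rule eventually_mono[rotated])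
qed

lemma tendsto_ereal_if_lower_and_eventually_upper:
  fixes L :: "'a \<Rightarrow> ereal"
  assumes lower: "\<And>x. S \<le> L x"
    and upper: "\<And>\<delta>. 0 < \<delta> \<Longrightarrow> eventually (\<lambda>x. L x \<le> S + ereal \<delta>) F"
  shows "(L \<longlongrightarrow> S) F"
proof (rule order_tendstoI)
  fix y assume "y < S"
  then show "eventually (\<lambda>x. y < L x) F"
    using lower by (auto intro: always_eventually order.strict_trans2)
next
  fix y assume "S < y"
  then obtain z where z: "S < ereal z" "ereal z < y" using ereal_dense2 by blast
  obtain \<delta> where "0 < \<delta>" "S + ereal \<delta> < y"
  proof (cases S)
    case (real s)
    then show ?thesis using z by (intro that[of "z - s"]) auto
  next
    case MInf
    then show ?thesis using z by (intro that[of 1]) auto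
  qed (use z in auto)
  with upper[OF \<open>0 < \<delta>\<close>] show "eventually (\<lambda>x. L x < y) F"
    by (auto elim!: eventually_mono intro: order.strict_trans1)
qed

lemma abs_le_sqrt_if_sum_squares_le:
  fixes f :: "'a \<Rightarrow> real"
  assumes "\<And>F. finite F \<Longrightarrow> (\<Sum>k\<in>F. (f k)\<^sup>2) \<le> C"
  shows "\<bar>f k\<bar> \<le> sqrt C"
  using real_sqrt_le_mono[OF assms[of "{k}"]] by simp

lemma first_moment_bound_of_expansion:
  fixes a :: "int^'n \<Rightarrow> real^'n \<Rightarrow> real \<Rightarrow> real" and p q R :: "int^'n \<Rightarrow> real^'n \<Rightarrow> real"
  assumes "0 \<le> e"
    and expansion: "\<And>k x. a k x e = p k x + e * q k x + R k x"
    and p_decay: "\<And>n::nat. \<exists>C. \<forall>x F. finite F \<longrightarrow> (\<Sum>k\<in>F. (norm (rvec k) ^ n * p k x)\<^sup>2) \<le> C"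
    and q_decay: "\<And>n::nat. \<exists>C. \<forall>x F. finite F \<longrightarrow> (\<Sum>k\<in>F. (norm (rvec k) ^ n * q k x)\<^sup>2) \<le> C"
    and R_decay: "\<And>n::nat. \<exists>C. \<forall>x F. finite F \<longrightarrow> (\<Sum>k\<in>F. (norm (rvec k) ^ n * R k x)\<^sup>2) \<le> C"
  shows "\<exists>B. \<forall>F x. finite F \<longrightarrow> (\<Sum>l\<in>F. \<bar>a l (e *\<^sub>R rvec (x l)) e\<bar> * norm (rvec l)) \<le> B"
proof -
  define n where "n = 2 * CARD('n) + 1"
  obtain C0 where "\<And>x F. finite F \<Longrightarrow> (\<Sum>k\<in>F. (norm (rvec k) ^ n * p k x)\<^sup>2) \<le> C0"
    using p_decay[of n] by blast
  then have bound0: "\<bar>norm (rvec l) ^ n * p l x\<bar> \<le> sqrt C0" for l x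
    by (rule abs_le_sqrt_if_sum_squares_le)
  obtain C1 where "\<And>x F. finite F \<Longrightarrow> (\<Sum>k\<in>F. (norm (rvec k) ^ n * q k x)\<^sup>2) \<le> C1"
    using q_decay[of n] by blast
  then have bound1: "\<bar>norm (rvec l) ^ n * q l x\<bar> \<le> sqrt C1" for l x
    by (rule abs_le_sqrt_if_sum_squares_le)
  obtain C2 where "\<And>x F. finite F \<Longrightarrow> (\<Sum>k\<in>F. (norm (rvec k) ^ n * R k x)\<^sup>2) \<le> C2"
    using R_decay[of n] by blast
  then have bound2: "\<bar>norm (rvec l) ^ n * R l x\<bar> \<le> sqrt C2" for l x
    by (rule abs_le_sqrt_if_sum_squares_le)
  have triangle: "\<bar>u + e * v + w\<bar> \<le> \<bar>u\<bar> + e * \<bar>v\<bar> + \<bar>w\<bar>" for u v w :: real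
  proof -
    have "\<bar>e * v\<bar> = e * \<bar>v\<bar>" using \<open>0 \<le> e\<close> by (simp add: abs_mult)
    then show ?thesis using abs_triangle_ineq[of "u + e * v" w] abs_triangle_ineq[of u "e * v"] by linarith
  qed
  have "norm (rvec l) ^ n * \<bar>a l x e\<bar> \<le> sqrt C0 + e * sqrt C1 + sqrt C2" for l x
  proof -
    have "norm (rvec l) ^ n * a l x e =
        norm (rvec l) ^ n * p l x + e * (norm (rvec l) ^ n * q l x) + norm (rvec l) ^ n * R l x"
      by (simp add: expansion algebra_simps)
    then have "norm (rvec l) ^ n * \<bar>a l x e\<bar> =
        \<bar>norm (rvec l) ^ n * p l x + e * (norm (rvec l) ^ n * q l x) + norm (rvec l) ^ n * R l x\<bar>"
      by (metis abs_mult abs_of_nonneg norm_ge_zero zero_le_power)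
    also have "\<dots> \<le> \<bar>norm (rvec l) ^ n * p l x\<bar> + e * \<bar>norm (rvec l) ^ n * q l x\<bar> + \<bar>norm (rvec l) ^ n * R l x\<bar>"
      by (rule triangle)
    also have "\<dots> \<le> sqrt C0 + e * sqrt C1 + sqrt C2"
      using bound0 bound1 bound2 \<open>0 \<le> e\<close> by (intro add_mono mult_left_mono)
    finally show ?thesis .
  qed
  then have "(\<Sum>l\<in>F. \<bar>a l (e *\<^sub>R rvec (x l)) e\<bar> * norm (rvec l)) \<le>
      (sqrt C0 + e * sqrt C1 + sqrt C2) * 5 ^ CARD('n)" if "finite F" for F x
    using sum_first_moment_le[where A="\<lambda>l z. a l z e", OF _ that] by (simp add: n_def)
  then show ?thesis by blast
qed

theorem lemmaB3:
  fixes a :: "int^'n \<Rightarrow> real^'n \<Rightarrow> real \<Rightarrow> real"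
    and a0 a1 :: "int^'n \<Rightarrow> real^'n \<Rightarrow> real"
    and R2 :: "int^'n \<Rightarrow> real^'n \<Rightarrow> real \<Rightarrow> real"
    and V :: "real \<Rightarrow> real^'n \<Rightarrow> real"
    and V0 V1 :: "real^'n \<Rightarrow> real"
    and RV :: "real^'n \<Rightarrow> real \<Rightarrow> real"
    and \<epsilon>0 \<epsilon> :: real
  assumes
    \<comment> \<open>(a)(i)\<close>
    a_exp: "\<And>k x e. 0 < e \<Longrightarrow> e \<le> 1 \<Longrightarrow> a k x e = a0 k x + e * a1 k x + R2 k x e"
  and a0_smooth: "\<And>k. smooth_on UNIV (a0 k)"
  and a1_smooth: "\<And>k. smooth_on UNIV (a1 k)"
  and a0_lip: "\<exists>C. \<forall>k x h. \<bar>a0 k x - a0 k (x + h)\<bar> \<le> C * norm h"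
  and a1_lip: "\<exists>C. \<forall>k x h. \<bar>a1 k x - a1 k (x + h)\<bar> \<le> C * norm h"
  and R2_smooth: "\<And>k. smooth_on (UNIV \<times> {0<..1}) (\<lambda>p. R2 k (fst p) (snd p))"
    \<comment> \<open>(a)(ii)\<close>
  and a0_sum: "\<And>x. ((\<lambda>k. a0 k x) has_sum 0) UNIV"
  and a0_nonpos: "\<And>k x. k \<noteq> 0 \<Longrightarrow> a0 k x \<le> 0"
    \<comment> \<open>(a)(iii)\<close>
  and a_sym: "\<And>k x e. 0 < e \<Longrightarrow> e \<le> 1 \<Longrightarrow> a k x e = a (- k) (x + e *\<^sub>R rvec k) e"
    \<comment> \<open>(a)(iv): weighted l^2 bounds (squared norms, via finite partial sums)\<close>
  and a0_decay: "\<And>(n::nat) vs. set vs \<subseteq> Basis \<Longrightarrow> \<exists>C. \<forall>x F. finite F \<longrightarrow>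
        (\<Sum>k\<in>F. (norm (rvec k) ^ n * pds UNIV vs (a0 k) x)\<^sup>2) \<le> C"
  and a1_decay: "\<And>(n::nat) vs. set vs \<subseteq> Basis \<Longrightarrow> \<exists>C. \<forall>x F. finite F \<longrightarrow>
        (\<Sum>k\<in>F. (norm (rvec k) ^ n * pds UNIV vs (a1 k) x)\<^sup>2) \<le> C"
  and R2_decay: "\<And>(n::nat) vs. set vs \<subseteq> Basis \<Longrightarrow> \<exists>C. \<forall>x e F. 0 < e \<longrightarrow> e \<le> 1 \<longrightarrow> finite F \<longrightarrow>
        (\<Sum>k\<in>F. (norm (rvec k) ^ n * pds UNIV vs (\<lambda>y. R2 k y e) x)\<^sup>2) \<le> (C * e\<^sup>2)\<^sup>2"
    \<comment> \<open>(a)(v)\<close>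
  and a0_span: "\<And>x. span {rvec k | k. a0 k x < 0} = UNIV"
    \<comment> \<open>(b)\<close>
  and eps0_pos: "0 < \<epsilon>0"
  and V_exp: "\<And>e x. 0 < e \<Longrightarrow> e \<le> \<epsilon>0 \<Longrightarrow> V e x = V0 x + e * V1 x + RV x e"
  and V0_smooth: "smooth_on UNIV V0"
  and V1_smooth: "smooth_on UNIV V1"
  and RV_smooth: "smooth_on (UNIV \<times> {0<..\<epsilon>0}) (\<lambda>p. RV (fst p) (snd p))"
  and RV_small: "\<And>K. compact K \<Longrightarrow> \<exists>C. \<forall>e x. 0 < e \<longrightarrow> e \<le> \<epsilon>0 \<longrightarrow> x \<in> K \<longrightarrow> \<bar>RV x e\<bar> \<le> C * e\<^sup>2"
  and V_poly: "\<And>e. 0 < e \<Longrightarrow> e \<le> \<epsilon>0 \<Longrightarrow>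
        \<exists>C (N::nat). \<forall>k. \<bar>V e (e *\<^sub>R rvec k)\<bar> \<le> C * (1 + norm (e *\<^sub>R rvec k)) ^ N"
  and V_pos_infty: "\<exists>C R. C > 0 \<and> (\<forall>e k. 0 < e \<longrightarrow> e \<le> \<epsilon>0 \<longrightarrow> norm (e *\<^sub>R rvec k) \<ge> R
        \<longrightarrow> V e (e *\<^sub>R rvec k) > C)"
  and V0_nonneg: "\<And>x. V0 x \<ge> 0"
  and V0_zeros_finite: "finite {x. V0 x = 0}"
  and V0_hess: "\<And>z v. V0 z = 0 \<Longrightarrow> v \<noteq> 0 \<Longrightarrow>
        (\<Sum>i\<in>UNIV. \<Sum>j\<in>UNIV. v $ i * v $ j * pds UNIV [axis i 1, axis j 1] V0 z) > 0"
    \<comment> \<open>(c)\<close>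
  and t0_pos: "\<And>z \<xi>. V0 z = 0 \<Longrightarrow> \<not> (\<forall>i. \<exists>m::int. \<xi> $ i = 2 * pi * of_int m) \<Longrightarrow>
        t0 a0 z \<xi> \<in> \<real> \<and> Re (t0 a0 z \<xi>) > 0"
    \<comment> \<open>the fixed semiclassical parameter\<close>
  and eps: "0 < \<epsilon>" "\<epsilon> \<le> 1" "\<epsilon> \<le> \<epsilon>0"
  shows "((\<lambda>R. Liminf (at_infty_lat \<epsilon>) (\<lambda>k. LambdaR a V \<epsilon> R k))
           \<longlongrightarrow> Sigma_ess a V \<epsilon>) at_top"
proof -
  have "\<exists>B. \<forall>F x. finite F \<longrightarrow> (\<Sum>l\<in>F. \<bar>a l (\<epsilon> *\<^sub>R rvec (x l)) \<epsilon>\<bar> * norm (rvec l)) \<le> B"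
  proof (rule first_moment_bound_of_expansion[where p=a0 and q=a1 and R="\<lambda>k x. R2 k x \<epsilon>"])
    show "a k x \<epsilon> = a0 k x + \<epsilon> * a1 k x + R2 k x \<epsilon>" for k x
      using a_exp eps by simp
    show "\<exists>C. \<forall>x F. finite F \<longrightarrow> (\<Sum>k\<in>F. (norm (rvec k) ^ n * a0 k x)\<^sup>2) \<le> C"
      and "\<exists>C. \<forall>x F. finite F \<longrightarrow> (\<Sum>k\<in>F. (norm (rvec k) ^ n * a1 k x)\<^sup>2) \<le> C" for n
      using a0_decay[of "[]" n] a1_decay[of "[]" n] by simp_all
    show "\<exists>C. \<forall>x F. finite F \<longrightarrow> (\<Sum>k\<in>F. (norm (rvec k) ^ n * R2 k x \<epsilon>)\<^sup>2) \<le> C" for n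
      using R2_decay[of "[]" n] eps by auto
  qed (use eps in simp)
  then obtain B where
    moment: "\<And>F x. finite F \<Longrightarrow> (\<Sum>l\<in>F. \<bar>a l (\<epsilon> *\<^sub>R rvec (x l)) \<epsilon>\<bar> * norm (rvec l)) \<le> B"
    by blast
  show ?thesis
  proof (rule tendsto_ereal_if_lower_and_eventually_upper)
    show "Sigma_ess a V \<epsilon> \<le> Liminf (at_infty_lat \<epsilon>) (LambdaR a V \<epsilon> R)" for R
      by (rule Sigma_ess_le_Liminf_LambdaR)
    show "eventually (\<lambda>R. Liminf (at_infty_lat \<epsilon>) (LambdaR a V \<epsilon> R) \<le> Sigma_ess a V \<epsilon> + ereal \<delta>) at_top"
      if "0 < \<delta>" for \<delta>
      by (rule eventually_Liminf_LambdaR_le_Sigma_ess[where a=a, OF eps(1) that moment])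
  qed
qed

end
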